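(* Let $k=2r+1$ with $r\geq 1$ and $G=BS(1,k)$. Let $\mathcal{C}_o$ be the set of words over $\{a^{\pm1},t^{\pm1}\}$ \[\mathcal{C}_o=\{\epsilon,a^{\pm1},\ldots,a^{\pm(r+1)}\}\cup\{a^{x_0}ta^{x_1}t\cdots ta^{x_d}t^{-d}\mid d\geq1,\ x_0\neq0,\ x_d\neq0,\ A\},\] where $A$ denotes the conditions: $|x_d|\leq r+1$; $|x_i|\leq r$ for $0\le i<d$; and if $x_{d-1}=\pm r$ then $x_d\neq\mp1$. Then $\mathcal{C}_o$ is a set of unique geodesic representatives for the conjugacy classes of $G$ contained in the subgroup $\mathbb{Z}[1/k]$: every conjugacy class of $G$ contained in $\mathbb{Z}[1/k]$ is represented by exactly one word of $\mathcal{C}_o$, and each word of $\mathcal{C}_o$ is a geodesic word whose length equals the length of its conjugacy class.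
   Context: $BS(1,k)=\langle a,t\mid tat^{-1}=a^k\rangle\cong \mathbb{Z}[1/k]\rtimes\mathbb{Z}$ via $a\mapsto(1,0)$, $t\mapsto(0,1)$, where the generator of $\mathbb{Z}$ acts on $\mathbb{Z}[1/k]=\{x\in\mathbb{Q}: k^ex\in\mathbb{Z}\text{ for some }e\}$ by multiplication by $k$; the subgroup $\mathbb{Z}[1/k]$ consists of the elements $(x,0)$. For an integer $x$, $a^x$ denotes the word consisting of $|x|$ copies of $a$ (if $x>0$) or of $a^{-1}$ (if $x<0$); $\epsilon$ is the empty word. Word length is with respect to $\{a,t\}$; a word is geodesic if no shorter word represents the same element; the length of a conjugacy class is the minimal length of its elements. *)

theory Defs
  imports Complex_Main
begin

text \<open>BS(1,k) realised as Z[1/k] \<rtimes> Z, elements are pairs (x, n) with x a rational in Z[1/k].\<close>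

definition Zk :: "int \<Rightarrow> rat set" where
  "Zk k = {q. \<exists>e::nat. of_int k ^ e * q \<in> \<int>}"

definition BS :: "int \<Rightarrow> (rat \<times> int) set" where
  "BS k = {(x, n). x \<in> Zk k}"

definition bs_mult :: "int \<Rightarrow> rat \<times> int \<Rightarrow> rat \<times> int \<Rightarrow> rat \<times> int" where
  "bs_mult k g h = (fst g + (of_int k) powi (snd g) * fst h, snd g + snd h)"

definition bs_inv :: "int \<Rightarrow> rat \<times> int \<Rightarrow> rat \<times> int" where
  "bs_inv k g = (- ((of_int k) powi (- snd g)) * fst g, - snd g)"

definition bs_conj :: "int \<Rightarrow> rat \<times> int \<Rightarrow> rat \<times> int \<Rightarrow> bool" where
  "bs_conj k g h \<longleftrightarrow> (\<exists>u\<in>BS k. h = bs_mult k (bs_mult k u g) (bs_inv k u))"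

datatype gen = GA | GAi | GT | GTi

fun gen_val :: "gen \<Rightarrow> rat \<times> int" where
  "gen_val GA = (1, 0)"
| "gen_val GAi = (-1, 0)"
| "gen_val GT = (0, 1)"
| "gen_val GTi = (0, -1)"

definition eval_word :: "int \<Rightarrow> gen list \<Rightarrow> rat \<times> int" where
  "eval_word k w = foldr (\<lambda>g acc. bs_mult k (gen_val g) acc) w (0, 0)"

definition geodesic :: "int \<Rightarrow> gen list \<Rightarrow> bool" where
  "geodesic k w \<longleftrightarrow> (\<forall>v. eval_word k v = eval_word k w \<longrightarrow> length w \<le> length v)"

definition conj_class_minimal :: "int \<Rightarrow> gen list \<Rightarrow> bool" where
  "conj_class_minimal k w \<longleftrightarrow>
     (\<forall>v. bs_conj k (eval_word k w) (eval_word k v) \<longrightarrow> length w \<le> length v)"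

definition apow :: "int \<Rightarrow> gen list" where
  "apow x = (if x \<ge> 0 then replicate (nat x) GA else replicate (nat (- x)) GAi)"

text \<open>a^{x_0} t a^{x_1} t ... t a^{x_d} t^{-d}, where xs = [x_0, ..., x_d].\<close>
definition cword :: "int list \<Rightarrow> gen list" where
  "cword xs = concat (map (\<lambda>x. apow x @ [GT]) (butlast xs)) @ apow (last xs)
              @ replicate (length xs - 1) GTi"

definition C_o :: "int \<Rightarrow> gen list set" where
  "C_o r = {apow x | x. \<bar>x\<bar> \<le> r + 1} \<union>
     {cword xs | xs. let d = length xs - 1 in
        d \<ge> 1 \<and> xs ! 0 \<noteq> 0 \<and> xs ! d \<noteq> 0 \<and> \<bar>xs ! d\<bar> \<le> r + 1 \<and>
        (\<forall>i<d. \<bar>xs ! i\<bar> \<le> r) \<and>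
        (xs ! (d - 1) = r \<longrightarrow> xs ! d \<noteq> -1) \<and>
        (xs ! (d - 1) = - r \<longrightarrow> xs ! d \<noteq> 1)}"

end

theory Submission
  imports Defs "HOL-Computational_Algebra.Euclidean_Algorithm"
begin

text \<open>Conjugating \<open>(x, 0)\<close> by \<open>t\<^sup>n\<close> gives \<open>(k\<^sup>n x, 0)\<close>, so every conjugacy class
  inside \<open>\<int>[1/k]\<close> contains exactly one integer \<open>y\<close> with \<open>y = 0 \<or> \<not> k dvd y\<close>.
  Reading a word for \<open>(k\<^sup>n y, 0)\<close> from the right and recording the exponents of \<open>a\<close>
  at each height of \<open>t\<close> gives digits \<open>c\<^sub>i\<close> with \<open>k\<^sup>m \<Sum> c\<^sub>i k\<^sup>i = k\<^sup>n y\<close>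
  and cost \<open>\<Sum> |c\<^sub>i| + 2 (|c| - 1)\<close> at most the length of the word.
  The cost \<open>T\<close> of the balanced base-\<open>k\<close> expansion is 1-Lipschitz and satisfies
  \<open>T (k M) = T M + 2\<close>; hence \<open>T (\<Sum> c\<^sub>i k\<^sup>i)\<close> is at most the cost of \<open>c\<close> and
  \<open>T y \<le> T (k\<^sup>j y)\<close>, so every such word has length at least \<open>T y\<close>.
  The words of \<open>C\<^sub>o\<close> are exactly the spelled-out balanced expansions of these
  integers \<open>y\<close>, of length \<open>T y\<close>.\<close>

definition bal_div :: "int \<Rightarrow> int \<Rightarrow> int" where
  "bal_div r N = (N + r) div (2 * r + 1)"

definition bal_mod :: "int \<Rightarrow> int \<Rightarrow> int" where
  "bal_mod r N = N - (2 * r + 1) * bal_div r N"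

lemma bal_div_mod_eq: "N = bal_mod r N + (2 * r + 1) * bal_div r N"
  by (simp add: bal_mod_def)

lemma abs_bal_mod_le:
  assumes "0 \<le> r" shows "\<bar>bal_mod r N\<bar> \<le> r"
proof -
  have "bal_mod r N = (N + r) mod (2 * r + 1) - r"
    by (simp add: bal_mod_def bal_div_def minus_div_mult_eq_mod [symmetric])
  moreover have "0 \<le> (N + r) mod (2 * r + 1)" "(N + r) mod (2 * r + 1) < 2 * r + 1"
    using assms by (simp, intro pos_mod_bound) simp
  ultimately show ?thesis by linarith
qed

lemma bal_div_mod_unique:
  assumes "0 \<le> r" "N = p + (2 * r + 1) * q" "\<bar>p\<bar> \<le> r"
  shows "bal_div r N = q" "bal_mod r N = p"
proof -
  have "(N + r) div (2 * r + 1) = ((p + r) + q * (2 * r + 1)) div (2 * r + 1)"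
    using assms(2) by (simp add: algebra_simps)
  also have "\<dots> = q + (p + r) div (2 * r + 1)"
    using assms(1) by (intro div_mult_self1) simp
  also have "(p + r) div (2 * r + 1) = 0"
    using assms by (intro div_pos_pos_trivial) auto
  finally show "bal_div r N = q" by (simp add: bal_div_def)
  then show "bal_mod r N = p" by (simp add: bal_mod_def assms(2))
qed

lemma abs_bal_div_less:
  assumes "1 \<le> r" "r + 1 < \<bar>N\<bar>" shows "\<bar>bal_div r N\<bar> < \<bar>N\<bar>"
proof -
  have "3 * \<bar>bal_div r N\<bar> \<le> \<bar>(2 * r + 1) * bal_div r N\<bar>"
    using assms(1) by (simp add: abs_mult mult_right_mono)
  also have "\<dots> \<le> \<bar>N\<bar> + r"
    using bal_div_mod_eq[of N r] abs_bal_mod_le[of r N] assms(1) by linarith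
  finally show ?thesis using assms by linarith
qed

text \<open>Balanced digits, except that the leading digit may be \<open>\<plusminus>(r + 1)\<close>: as a single digit
  \<open>r + 1\<close> costs \<open>r + 1\<close>, while \<open>- r + (2 r + 1) \<cdot> 1\<close> costs \<open>r + 3\<close>.\<close>

function bal_digits :: "int \<Rightarrow> int \<Rightarrow> int list" where
  "bal_digits r N =
     (if r < 1 \<or> \<bar>N\<bar> \<le> r + 1 then [N] else bal_mod r N # bal_digits r (bal_div r N))"
  by auto
termination
  by (relation "measure (\<lambda>(r, N). nat \<bar>N\<bar>)") (auto intro!: abs_bal_div_less)

declare bal_digits.simps [simp del]

definition digits_cost :: "int list \<Rightarrow> int" where
  "digits_cost c = sum_list (map abs c) + 2 * (int (length c) - 1)"

definition bal_cost :: "int \<Rightarrow> int \<Rightarrow> int" where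
  "bal_cost r N = digits_cost (bal_digits r N)"

lemma bal_digits_small: "1 \<le> r \<Longrightarrow> \<bar>N\<bar> \<le> r + 1 \<Longrightarrow> bal_digits r N = [N]"
  by (simp add: bal_digits.simps)

lemma bal_digits_big:
  assumes "1 \<le> r" "r + 1 < \<bar>N\<bar>" "N = p + (2 * r + 1) * q" "\<bar>p\<bar> \<le> r"
  shows "bal_digits r N = p # bal_digits r q"
  using assms bal_div_mod_unique[of r N p q] by (subst bal_digits.simps) simp

lemma bal_digits_ne_Nil: "bal_digits r N \<noteq> []"
  by (subst bal_digits.simps) simp

lemma horner_sum_bal_digits: "horner_sum (\<lambda>x. x) (2 * r + 1) (bal_digits r N) = N"
proof (induction r N rule: bal_digits.induct)
  case (1 r N)
  then show ?case
    using bal_div_mod_eq[of N r] by (subst bal_digits.simps) auto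
qed

lemma digits_cost_Cons:
  "c \<noteq> [] \<Longrightarrow> digits_cost (x # c) = \<bar>x\<bar> + 2 + digits_cost c"
  by (simp add: digits_cost_def)

lemma digits_cost_nonneg: "c \<noteq> [] \<Longrightarrow> 0 \<le> digits_cost c"
  unfolding digits_cost_def by (cases c) (auto intro!: add_nonneg_nonneg sum_list_nonneg)

lemma bal_cost_small: "1 \<le> r \<Longrightarrow> \<bar>N\<bar> \<le> r + 1 \<Longrightarrow> bal_cost r N = \<bar>N\<bar>"
  by (simp add: bal_cost_def bal_digits_small digits_cost_def)

lemma bal_cost_big:
  assumes "1 \<le> r" "r + 1 < \<bar>N\<bar>" "N = p + (2 * r + 1) * q" "\<bar>p\<bar> \<le> r"
  shows "bal_cost r N = \<bar>p\<bar> + 2 + bal_cost r q"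
  using assms by (simp add: bal_cost_def bal_digits_big digits_cost_Cons bal_digits_ne_Nil)

lemma bal_cost_nonneg: "0 \<le> bal_cost r N"
  by (simp add: bal_cost_def digits_cost_nonneg bal_digits_ne_Nil)

lemma bal_cost_abs_eq_r_plus_2:
  assumes "1 \<le> r" "\<bar>N\<bar> = r + 2" shows "bal_cost r N = r + 2"
proof (cases "0 \<le> N")
  case True
  then have "bal_cost r N = \<bar>1 - r\<bar> + 2 + bal_cost r 1"
    using assms by (intro bal_cost_big) auto
  then show ?thesis using assms by (simp add: bal_cost_small)
next
  case False
  then have "bal_cost r N = \<bar>r - 1\<bar> + 2 + bal_cost r (-1)"
    using assms by (intro bal_cost_big) auto
  then show ?thesis using assms by (simp add: bal_cost_small)
qed

lemma bal_cost_succ: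
  assumes "1 \<le> r" shows "\<bar>bal_cost r (N + 1) - bal_cost r N\<bar> \<le> 1"
proof (induction "nat \<bar>N\<bar>" arbitrary: N rule: less_induct)
  case less
  consider (small) "\<bar>N\<bar> \<le> r + 1" "\<bar>N + 1\<bar> \<le> r + 1" | (boundary) "N = r + 1 \<or> N = - r - 2"
    | (big) "r + 1 < \<bar>N\<bar>" "r + 1 < \<bar>N + 1\<bar>"
    by linarith
  then show ?case
  proof cases
    case small
    then show ?thesis using assms by (simp add: bal_cost_small)
  next
    case boundary
    then show ?thesis using assms bal_cost_abs_eq_r_plus_2 by (auto simp: bal_cost_small)
  next
    case big
    define p q where "p = bal_mod r N" and "q = bal_div r N"
    have N: "N = p + (2 * r + 1) * q" "\<bar>p\<bar> \<le> r"
      unfolding p_def q_def using assms bal_div_mod_eq abs_bal_mod_le by auto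
    have cost_N: "bal_cost r N = \<bar>p\<bar> + 2 + bal_cost r q"
      using assms big N by (intro bal_cost_big) auto
    show ?thesis
    proof (cases "p = r")
      case True
      \<comment> \<open>carry: \<open>N + 1 = - r + (2 r + 1) (q + 1)\<close>\<close>
      have "bal_cost r (N + 1) = \<bar>-r\<bar> + 2 + bal_cost r (q + 1)"
        using assms big N True by (intro bal_cost_big) (auto simp: algebra_simps)
      moreover have "nat \<bar>q\<bar> < nat \<bar>N\<bar>"
        using abs_bal_div_less[OF assms, of N] big q_def by simp
      ultimately show ?thesis using less[of q] cost_N True by simp
    next
      case False
      have "bal_cost r (N + 1) = \<bar>p + 1\<bar> + 2 + bal_cost r q"
        using assms big N False by (intro bal_cost_big) auto
      then show ?thesis using cost_N by simp
    qed
  qed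
qed

lemma bal_cost_lipschitz:
  assumes "1 \<le> r" shows "\<bar>bal_cost r (N + j) - bal_cost r N\<bar> \<le> \<bar>j\<bar>"
proof -
  have nat_step: "\<bar>bal_cost r (M + int n) - bal_cost r M\<bar> \<le> int n" for M n
  proof (induction n)
    case (Suc n)
    have "bal_cost r (M + int (Suc n)) = bal_cost r (M + int n + 1)"
      by (simp add: ac_simps)
    then show ?case
      using Suc bal_cost_succ[OF assms, of "M + int n"] of_nat_Suc[of n] by linarith
  qed simp
  show ?thesis
  proof (cases "0 \<le> j")
    case True
    then show ?thesis using nat_step[of N "nat j"] by simp
  next
    case False
    then show ?thesis using nat_step[of "N + j" "nat (- j)"] by simp
  qed
qed

lemma bal_cost_le_abs: "1 \<le> r \<Longrightarrow> bal_cost r N \<le> \<bar>N\<bar>"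
  using bal_cost_lipschitz[of r 0 N] bal_cost_small[of r 0] by simp

lemma bal_cost_mult:
  assumes "1 \<le> r" "M \<noteq> 0" shows "bal_cost r ((2 * r + 1) * M) = bal_cost r M + 2"
proof -
  have "2 * r + 1 \<le> \<bar>(2 * r + 1) * M\<bar>"
    using assms by (simp add: abs_mult mult_le_cancel_left1)
  then have "r + 1 < \<bar>(2 * r + 1) * M\<bar>"
    using assms by linarith
  then show ?thesis using assms by (subst bal_cost_big[where p = 0 and q = M]) auto
qed

lemma bal_cost_add_mult_le:
  assumes "1 \<le> r" shows "bal_cost r (p + (2 * r + 1) * M) \<le> \<bar>p\<bar> + 2 + bal_cost r M"
proof (cases "M = 0")
  case True
  then show ?thesis using bal_cost_le_abs[OF assms, of p] bal_cost_nonneg[of r 0] by simp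
next
  case False
  then show ?thesis
    using bal_cost_lipschitz[OF assms, of "(2 * r + 1) * M" p] bal_cost_mult[OF assms]
    by (simp add: add.commute)
qed

lemma bal_cost_le_power_mult:
  assumes "1 \<le> r" shows "bal_cost r y \<le> bal_cost r ((2 * r + 1) ^ j * y)"
proof (induction j)
  case (Suc j)
  show ?case
  proof (cases "y = 0")
    case False
    then have "(2 * r + 1) ^ j * y \<noteq> 0" using assms by simp
    then show ?thesis
      using Suc bal_cost_mult[OF assms, of "(2 * r + 1) ^ j * y"] by (simp add: mult.assoc)
  qed simp
qed simp

lemma bal_cost_le_digits_cost:
  assumes "1 \<le> r" "c \<noteq> []"
  shows "bal_cost r (horner_sum (\<lambda>x. x) (2 * r + 1) c) \<le> digits_cost c"
  using assms(2)
proof (induction c)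
  case (Cons x c)
  show ?case
  proof (cases "c = []")
    case True
    then show ?thesis using bal_cost_le_abs[OF assms(1), of x] by (simp add: digits_cost_def)
  next
    case False
    then show ?thesis
      using Cons.IH False bal_cost_add_mult_le[OF assms(1), of x "horner_sum (\<lambda>x. x) (2 * r + 1) c"]
      by (simp add: digits_cost_Cons)
  qed
qed simp

text \<open>The side condition on the two top digits excludes \<open>r - (2 r + 1) = - (r + 1)\<close> and
  \<open>- r + (2 r + 1) = r + 1\<close>, which are single digits.\<close>

fun bal_canonical :: "int \<Rightarrow> int list \<Rightarrow> bool" where
  "bal_canonical r [] = False"
| "bal_canonical r [x] \<longleftrightarrow> x \<noteq> 0 \<and> \<bar>x\<bar> \<le> r + 1"
| "bal_canonical r (x # y # zs) \<longleftrightarrow> \<bar>x\<bar> \<le> r \<and> bal_canonical r (y # zs) \<and>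
      (zs = [] \<longrightarrow> (x = r \<longrightarrow> y \<noteq> -1) \<and> (x = -r \<longrightarrow> y \<noteq> 1))"

lemma abs_add_mult_gt:
  fixes r V x :: int
  assumes "1 \<le> r" "2 \<le> \<bar>V\<bar>" "\<bar>x\<bar> \<le> r"
  shows "r + 1 < \<bar>x + (2 * r + 1) * V\<bar>"
proof -
  define W where "W = (2 * r + 1) * V"
  have "(2 * r + 1) * 2 \<le> \<bar>W\<bar>"
    unfolding W_def using assms by (simp only: abs_mult, intro mult_mono) auto
  moreover have "\<bar>W\<bar> \<le> \<bar>x + W\<bar> + \<bar>x\<bar>" by arith
  ultimately show ?thesis using assms by (simp add: W_def [symmetric])
qed

lemma abs_horner_sum_gt:
  "bal_canonical r xs \<Longrightarrow> 1 \<le> r \<Longrightarrow> 2 \<le> length xs \<Longrightarrow>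
    r + 1 < \<bar>horner_sum (\<lambda>x. x) (2 * r + 1) xs\<bar>"
proof (induction r xs rule: bal_canonical.induct)
  case (3 r x y zs)
  define V where "V = horner_sum (\<lambda>x. x) (2 * r + 1) (y # zs)"
  have "\<bar>x\<bar> \<le> r" using "3.prems" by simp
  show ?case
  proof (cases zs)
    case Nil
    then have y: "V = y" "y \<noteq> 0" "x = r \<longrightarrow> y \<noteq> -1" "x = -r \<longrightarrow> y \<noteq> 1"
      using "3.prems" by (auto simp: V_def)
    then consider "2 \<le> \<bar>y\<bar>" | "y = 1" | "y = -1" by linarith
    then show ?thesis
    proof cases
      case 1
      then show ?thesis
        using abs_add_mult_gt[OF \<open>1 \<le> r\<close> _ \<open>\<bar>x\<bar> \<le> r\<close>, of V] y Nil by (simp add: V_def)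
    qed (use y Nil \<open>\<bar>x\<bar> \<le> r\<close> in auto)
  next
    case (Cons z zs')
    then have "r + 1 < \<bar>V\<bar>" using "3.IH" "3.prems" by (simp add: V_def)
    then show ?thesis
      using abs_add_mult_gt[OF \<open>1 \<le> r\<close> _ \<open>\<bar>x\<bar> \<le> r\<close>, of V] "3.prems" by (simp add: V_def)
  qed
qed auto

lemma bal_digits_horner_sum:
  "bal_canonical r xs \<Longrightarrow> 1 \<le> r \<Longrightarrow> bal_digits r (horner_sum (\<lambda>x. x) (2 * r + 1) xs) = xs"
proof (induction r xs rule: bal_canonical.induct)
  case (2 r x)
  then show ?case by (simp add: bal_digits_small)
next
  case (3 r x y zs)
  define V where "V = horner_sum (\<lambda>x. x) (2 * r + 1) (y # zs)"
  have "r + 1 < \<bar>x + (2 * r + 1) * V\<bar>"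
    using "3.prems" abs_horner_sum_gt[of r "x # y # zs"] by (simp add: V_def)
  then have "bal_digits r (x + (2 * r + 1) * V) = x # bal_digits r V"
    using "3.prems" by (intro bal_digits_big) auto
  then show ?case using "3.prems" "3.IH" by (simp add: V_def)
qed simp

lemma bal_canonical_bal_digits:
  assumes "1 \<le> r" shows "N \<noteq> 0 \<Longrightarrow> bal_canonical r (bal_digits r N)"
proof (induction "nat \<bar>N\<bar>" arbitrary: N rule: less_induct)
  case less
  show ?case
  proof (cases "\<bar>N\<bar> \<le> r + 1")
    case True
    then show ?thesis using less.prems assms by (simp add: bal_digits_small)
  next
    case False
    define p q where "p = bal_mod r N" and "q = bal_div r N"
    have N: "N = p + (2 * r + 1) * q" "\<bar>p\<bar> \<le> r"
      unfolding p_def q_def using assms bal_div_mod_eq abs_bal_mod_le by auto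
    then have "q \<noteq> 0" using False by auto
    moreover have "nat \<bar>q\<bar> < nat \<bar>N\<bar>"
      using abs_bal_div_less[OF assms, of N] False q_def by simp
    ultimately have IH: "bal_canonical r (bal_digits r q)" using less.hyps by blast
    obtain y zs where yzs: "bal_digits r q = y # zs"
      using bal_digits_ne_Nil by (meson neq_Nil_conv)
    have "zs = [] \<Longrightarrow> y = q"
      using horner_sum_bal_digits[of r q] yzs by simp
    moreover have "\<not> (p = r \<and> q = -1)" "\<not> (p = -r \<and> q = 1)"
      using N False by auto
    ultimately have "bal_canonical r (p # bal_digits r q)"
      using IH yzs N by auto
    then show ?thesis using bal_digits_big[OF assms _ N] False by simp
  qed
qed

lemma bal_canonical_iff_nth:
  assumes "2 \<le> length xs"
  shows "bal_canonical r xs \<longleftrightarrow> (let d = length xs - 1 in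
    xs ! d \<noteq> 0 \<and> \<bar>xs ! d\<bar> \<le> r + 1 \<and> (\<forall>i<d. \<bar>xs ! i\<bar> \<le> r) \<and>
    (xs ! (d - 1) = r \<longrightarrow> xs ! d \<noteq> -1) \<and> (xs ! (d - 1) = - r \<longrightarrow> xs ! d \<noteq> 1))"
  (is "_ \<longleftrightarrow> ?nth xs")
  using assms
proof (induction xs)
  case (Cons x xs)
  then obtain y zs where xs: "xs = y # zs" by (cases xs) auto
  show ?case
  proof (cases zs)
    case Nil
    have "(\<forall>i<Suc 0. \<bar>[x, y] ! i\<bar> \<le> r) \<longleftrightarrow> \<bar>x\<bar> \<le> r" by auto
    then show ?thesis using xs Nil by auto
  next
    case (Cons z zs')
    have "(\<forall>i<length (x # y # zs) - 1. \<bar>(x # y # zs) ! i\<bar> \<le> r) \<longleftrightarrow>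
        \<bar>x\<bar> \<le> r \<and> (\<forall>i<length (y # zs) - 1. \<bar>(y # zs) ! i\<bar> \<le> r)"
      by (auto simp: nth_Cons less_Suc_eq_0_disj)
    moreover have "(x # y # zs) ! (length (x # y # zs) - 1 - 1) = (y # zs) ! (length (y # zs) - 1 - 1)"
      using Cons by simp
    ultimately have "?nth (x # y # zs) \<longleftrightarrow> \<bar>x\<bar> \<le> r \<and> ?nth (y # zs)"
      unfolding Let_def by auto
    then show ?thesis using Cons.IH xs Cons by simp
  qed
qed simp

lemma mem_C_o_iff:
  "w \<in> C_o r \<longleftrightarrow> (\<exists>x. w = apow x \<and> \<bar>x\<bar> \<le> r + 1) \<or>
    (\<exists>xs. w = cword xs \<and> 2 \<le> length xs \<and> hd xs \<noteq> 0 \<and> bal_canonical r xs)"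
proof -
  have "2 \<le> length xs \<Longrightarrow> hd xs = xs ! 0" for xs :: "int list"
    by (cases xs) auto
  then show ?thesis
    unfolding C_o_def by (auto simp: bal_canonical_iff_nth Let_def)
qed

lemma eval_word_Nil [simp]: "eval_word k [] = (0, 0)"
  by (simp add: eval_word_def)

lemma eval_word_Cons [simp]: "eval_word k (g # w) = bs_mult k (gen_val g) (eval_word k w)"
  by (simp add: eval_word_def)

lemma bs_mult_assoc:
  "k \<noteq> 0 \<Longrightarrow> bs_mult k (bs_mult k g h) l = bs_mult k g (bs_mult k h l)"
  by (simp add: bs_mult_def power_int_add algebra_simps)

lemma bs_mult_zero_left [simp]: "bs_mult k (0, 0) h = h"
  by (simp add: bs_mult_def)

lemma eval_word_append:
  "k \<noteq> 0 \<Longrightarrow> eval_word k (u @ v) = bs_mult k (eval_word k u) (eval_word k v)"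
  by (induction u) (simp_all add: bs_mult_assoc)

lemma eval_word_apow: "eval_word k (apow x) = (of_int x, 0)"
proof -
  have "eval_word k (replicate n GA) = (of_nat n, 0)"
    and "eval_word k (replicate n GAi) = (- of_nat n, 0)" for n
    by (induction n) (simp_all add: bs_mult_def)
  then show ?thesis by (simp add: apow_def)
qed

lemma length_apow: "int (length (apow x)) = \<bar>x\<bar>"
  by (simp add: apow_def)

lemma eval_word_replicate_GTi: "eval_word k (replicate n GTi) = (0, - int n)"
  by (induction n) (simp_all add: bs_mult_def)

lemma eval_word_concat_apow_GT:
  assumes "k \<noteq> 0"
  shows "eval_word k (concat (map (\<lambda>x. apow x @ [GT]) ys) @ w) =
    (of_int (horner_sum (\<lambda>x. x) k ys) + of_int k ^ length ys * fst (eval_word k w),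
     int (length ys) + snd (eval_word k w))"
proof (induction ys)
  case (Cons y ys)
  have "eval_word k (concat (map (\<lambda>x. apow x @ [GT]) (y # ys)) @ w) =
    bs_mult k (eval_word k (apow y)) (bs_mult k (0, 1) (eval_word k (concat (map (\<lambda>x. apow x @ [GT]) ys) @ w)))"
    using assms by (simp add: eval_word_append)
  then show ?case
    using Cons by (simp add: eval_word_apow bs_mult_def algebra_simps)
qed simp

lemma cword_snoc:
  "cword (ys @ [z]) = concat (map (\<lambda>x. apow x @ [GT]) ys) @ apow z @ replicate (length ys) GTi"
  by (simp add: cword_def)

lemma eval_cword:
  assumes "k \<noteq> 0" "xs \<noteq> []"
  shows "eval_word k (cword xs) = (of_int (horner_sum (\<lambda>x. x) k xs), 0)"
proof -
  obtain ys z where xs: "xs = ys @ [z]" using assms(2) by (metis rev_exhaust)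
  have "eval_word k (apow z @ replicate (length ys) GTi) = (of_int z, - int (length ys))"
    using assms(1) by (simp add: eval_word_append eval_word_apow eval_word_replicate_GTi bs_mult_def)
  then show ?thesis
    using assms(1) by (simp add: xs cword_snoc eval_word_concat_apow_GT horner_sum_append)
qed

lemma length_cword:
  assumes "xs \<noteq> []" shows "int (length (cword xs)) = digits_cost xs"
proof -
  obtain ys z where xs: "xs = ys @ [z]" using assms by (metis rev_exhaust)
  have "int (length (concat (map (\<lambda>x. apow x @ [GT]) ys))) = sum_list (map abs ys) + int (length ys)"
    by (induction ys) (simp_all add: length_apow [symmetric])
  then show ?thesis
    using length_apow[of z] by (simp add: xs cword_snoc digits_cost_def)
qed

lemma bs_conj_iff:
  assumes "k \<noteq> 0"
  shows "bs_conj k (x, 0) h \<longleftrightarrow> (\<exists>n. h = (of_int k powi n * x, 0))"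
proof
  assume "bs_conj k (x, 0) h"
  then obtain y n where h: "h = bs_mult k (bs_mult k (y, n) (x, 0)) (bs_inv k (y, n))"
    unfolding bs_conj_def by auto
  have "of_int k powi n * (- (of_int k powi (- n)) * y) = - y"
    using assms by (simp add: power_int_minus)
  then have "h = (of_int k powi n * x, 0)"
    unfolding h bs_mult_def bs_inv_def by (simp add: algebra_simps)
  then show "\<exists>n. h = (of_int k powi n * x, 0)" ..
next
  assume "\<exists>n. h = (of_int k powi n * x, 0)"
  then obtain n where "h = bs_mult k (bs_mult k (0, n) (x, 0)) (bs_inv k (0, n))"
    by (auto simp: bs_mult_def bs_inv_def)
  moreover have "(0, n) \<in> BS k" by (simp add: BS_def Zk_def)
  ultimately show "bs_conj k (x, 0) h" unfolding bs_conj_def by blast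
qed

lemma horner_sum_list_update_add:
  fixes c :: "'a::comm_semiring_1 list"
  shows "i < length c \<Longrightarrow>
    horner_sum (\<lambda>x. x) a (c[i := c ! i + d]) = horner_sum (\<lambda>x. x) a c + a ^ i * d"
  by (induction c arbitrary: i) (auto simp: algebra_simps nth_Cons split: nat.splits)

lemma sum_list_abs_list_update_add_le:
  fixes c :: "'a::ordered_ab_group_add_abs list"
  shows "i < length c \<Longrightarrow>
    sum_list (map abs (c[i := c ! i + d])) \<le> sum_list (map abs c) + \<bar>d\<bar>"
proof (induction c arbitrary: i)
  case (Cons x c)
  then show ?case
    using abs_triangle_ineq[of x d] by (cases i) (simp_all add: ac_simps)
qed simp

text \<open>The digits \<open>c\<close> record the exponents of \<open>a\<close> at the heights \<open>m, m + 1, \<dots>\<close>; the window of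
  heights always contains \<open>0\<close> and the current height \<open>snd g\<close>, which makes every digit beyond the
  first pay for one \<open>t\<close> and one \<open>t\<^sup>-\<^sup>1\<close> of the word.\<close>

definition digit_reading :: "int \<Rightarrow> int list \<Rightarrow> int \<Rightarrow> rat \<times> int \<Rightarrow> int \<Rightarrow> bool" where
  "digit_reading k c m g n \<longleftrightarrow> c \<noteq> [] \<and>
     m \<le> min 0 (snd g) \<and> max 0 (snd g) < m + int (length c) \<and>
     fst g = of_int k powi m * of_int (horner_sum (\<lambda>x. x) k c) \<and>
     digits_cost c - \<bar>snd g\<bar> \<le> n"

lemma digit_reading_mult_a:
  assumes "k \<noteq> 0" "digit_reading k c m g n"
  shows "digit_reading k (c[nat (- m) := c ! nat (- m) + s]) m (bs_mult k (of_int s, 0) g) (n + \<bar>s\<bar>)"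
proof -
  let ?i = "nat (- m)"
  have i: "?i < length c" and "m \<le> 0"
    using assms(2) by (auto simp: digit_reading_def)
  then have "(of_int k :: rat) ^ ?i = of_int k powi (- m)"
    by (simp add: power_int_def)
  then have "(of_int k :: rat) powi m * of_int k ^ ?i = 1"
    using assms(1) by (simp add: power_int_minus)
  then have "of_int k powi m * of_int (horner_sum (\<lambda>x. x) k (c[?i := c ! ?i + s])) =
      of_int s + of_int k powi m * (of_int (horner_sum (\<lambda>x. x) k c) :: rat)"
    using horner_sum_list_update_add[OF i] by (simp add: algebra_simps)
  moreover have "digits_cost (c[?i := c ! ?i + s]) \<le> digits_cost c + \<bar>s\<bar>"
    using sum_list_abs_list_update_add_le[OF i] by (simp add: digits_cost_def)
  ultimately show ?thesis
    using assms(2) by (auto simp: digit_reading_def bs_mult_def)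
qed

lemma digit_reading_mult_t:
  assumes "k \<noteq> 0" "digit_reading k c m g n"
  shows "\<exists>c' m'. digit_reading k c' m' (bs_mult k (0, 1) g) (n + 1)"
proof (cases "m = 0")
  case True
  \<comment> \<open>raising \<open>m\<close> would push height \<open>0\<close> out of the window: prepend a zero digit instead\<close>
  then have "digit_reading k (0 # c) 0 (bs_mult k (0, 1) g) (n + 1)"
    using assms(2) by (auto simp: digit_reading_def bs_mult_def digits_cost_Cons)
  then show ?thesis by blast
next
  case False
  have "(of_int k :: rat) powi (m + 1) = of_int k * of_int k powi m"
    using assms(1) by (simp add: power_int_add_1')
  then have "digit_reading k c (m + 1) (bs_mult k (0, 1) g) (n + 1)"
    using assms(2) False by (auto simp: digit_reading_def bs_mult_def)
  then show ?thesis by blast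
qed

lemma digit_reading_mult_t_inv:
  assumes "k \<noteq> 0" "digit_reading k c m g n"
  shows "\<exists>c' m'. digit_reading k c' m' (bs_mult k (0, -1) g) (n + 1)"
proof -
  have powi: "(of_int k :: rat) powi (m - 1) = inverse (of_int k) * of_int k powi m"
    using assms(1) by (simp add: power_int_diff field_simps)
  show ?thesis
  proof (cases "m + int (length c) = 1")
    case True
    have "digit_reading k (c @ [0]) (m - 1) (bs_mult k (0, -1) g) (n + 1)"
      using assms(2) True powi
      by (auto simp: digit_reading_def bs_mult_def digits_cost_def horner_sum_append power_int_minus)
    then show ?thesis by blast
  next
    case False
    then have "digit_reading k c (m - 1) (bs_mult k (0, -1) g) (n + 1)"
      using assms(2) powi by (auto simp: digit_reading_def bs_mult_def power_int_minus)
    then show ?thesis by blast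
  qed
qed

lemma exists_digit_reading:
  assumes "k \<noteq> 0" shows "\<exists>c m. digit_reading k c m (eval_word k v) (int (length v))"
proof (induction v)
  case Nil
  have "digit_reading k [0] 0 (0, 0) 0" by (simp add: digit_reading_def digits_cost_def)
  then show ?case by auto
next
  case (Cons g v)
  then obtain c m where reading: "digit_reading k c m (eval_word k v) (int (length v))"
    by blast
  show ?case
  proof (cases g)
    case GA
    then show ?thesis
      using digit_reading_mult_a[OF assms reading, of 1] by (auto simp: add.commute)
  next
    case GAi
    then show ?thesis
      using digit_reading_mult_a[OF assms reading, of "-1"] by (auto simp: add.commute)
  next
    case GT
    then show ?thesis using digit_reading_mult_t[OF assms reading] by (auto simp: add.commute)
  next
    case GTi
    then show ?thesis using digit_reading_mult_t_inv[OF assms reading] by (auto simp: add.commute)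
  qed
qed

lemma of_int_eq_power_int_mult_cases:
  fixes k a b :: int
  assumes "k \<noteq> 0" "(of_int a :: 'a::field_char_0) = of_int k powi n * of_int b"
  shows "0 \<le> n \<and> a = k ^ nat n * b \<or> n < 0 \<and> b = k ^ nat (- n) * a"
proof (cases "0 \<le> n")
  case True
  then have "(of_int a :: 'a) = of_int (k ^ nat n * b)"
    using assms(2) by (simp add: power_int_def)
  then have "a = k ^ nat n * b" by (simp only: of_int_eq_iff)
  then show ?thesis using True by simp
next
  case False
  then have "(of_int k :: 'a) powi n = inverse (of_int k ^ nat (- n))"
    by (simp add: power_int_def power_inverse)
  then have "(of_int b :: 'a) = of_int (k ^ nat (- n) * a)"
    using assms by (simp add: field_simps)
  then have "b = k ^ nat (- n) * a" by (simp only: of_int_eq_iff)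
  then show ?thesis using False by simp
qed

definition reduced :: "int \<Rightarrow> int \<Rightarrow> bool" where
  "reduced k y \<longleftrightarrow> y = 0 \<or> \<not> k dvd y"

lemma reduced_if_abs_less: "\<bar>y\<bar> < \<bar>k\<bar> \<Longrightarrow> reduced k y"
  unfolding reduced_def using dvd_imp_le_int[of y k] by auto

lemma reduced_power_mult_eq_0:
  "reduced k (k ^ j * y) \<Longrightarrow> 0 < j \<Longrightarrow> k ^ j * y = 0"
  unfolding reduced_def by (simp add: dvd_power)

lemma reduced_eq_if_power_int_mult:
  fixes k y y' :: int
  assumes "k \<noteq> 0" "reduced k y" "reduced k y'" "(of_int y' :: rat) = of_int k powi n * of_int y"
  shows "y' = y"
  using of_int_eq_power_int_mult_cases[OF assms(1,4)]
proof
  assume h: "0 \<le> n \<and> y' = k ^ nat n * y"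
  show ?thesis
  proof (cases "nat n = 0")
    case False
    then have "y' = 0" using h assms(3) reduced_power_mult_eq_0[of k "nat n" y] by simp
    then show ?thesis using h assms(1) by simp
  qed (use h in simp)
next
  assume h: "n < 0 \<and> y = k ^ nat (- n) * y'"
  then have "y = 0" using assms(2) reduced_power_mult_eq_0[of k "nat (- n)" y'] by simp
  then show ?thesis using h assms(1) by simp
qed

lemma exists_reduced_power_int_mult:
  assumes "1 < \<bar>k\<bar>" "x \<in> Zk k"
  shows "\<exists>y m. reduced k y \<and> (of_int y :: rat) = of_int k powi m * x"
proof -
  obtain e :: nat where "of_int k ^ e * x \<in> \<int>" using assms(2) unfolding Zk_def by auto
  then obtain N where N: "of_int k ^ e * x = (of_int N :: rat)" by (metis Ints_cases)
  show ?thesis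
  proof (cases "N = 0")
    case True
    then have "x = 0" using N assms(1) by auto
    then show ?thesis by (intro exI[of _ 0]) (simp add: reduced_def)
  next
    case False
    have k: "(of_int k :: rat) \<noteq> 0" using assms(1) by auto
    have "\<not> is_unit k" using assms(1) by (simp add: zdvd1_eq)
    then obtain j y where y: "N = k ^ j * y" "\<not> k dvd y"
      using multiplicity_decompose'[OF False] by metis
    have "of_int k ^ j * of_int y = (of_int k ^ e * x :: rat)"
      using N y(1) by simp
    then have "(of_int y :: rat) = of_int k ^ e * x / of_int k ^ j"
      using k by (simp add: field_simps)
    also have "\<dots> = of_int k powi (int e - int j) * x"
      using k by (simp add: power_int_diff)
    finally show ?thesis using y(2) unfolding reduced_def by blast
  qed
qed

lemma bal_cost_le_length:
  assumes "1 \<le> r" "reduced (2 * r + 1) y"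
    and v: "eval_word (2 * r + 1) v = (of_int (2 * r + 1) powi n * of_int y, 0)"
  shows "bal_cost r y \<le> int (length v)"
proof -
  let ?k = "2 * r + 1"
  have k: "?k \<noteq> 0" using assms(1) by simp
  obtain c m where "digit_reading ?k c m (eval_word ?k v) (int (length v))"
    using exists_digit_reading[OF k] by blast
  then have c: "c \<noteq> []" "digits_cost c \<le> int (length v)"
    and val: "of_int ?k powi m * of_int (horner_sum (\<lambda>x. x) ?k c) = (of_int ?k powi n * of_int y :: rat)"
    using v by (auto simp: digit_reading_def)
  have "(of_int (horner_sum (\<lambda>x. x) ?k c) :: rat) = of_int ?k powi (n - m) * of_int y"
    using k val by (simp add: power_int_diff field_simps)
  from of_int_eq_power_int_mult_cases[OF k this]
  show ?thesis
  proof
    assume "0 \<le> n - m \<and> horner_sum (\<lambda>x. x) ?k c = ?k ^ nat (n - m) * y"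
    then have "bal_cost r y \<le> bal_cost r (horner_sum (\<lambda>x. x) ?k c)"
      using bal_cost_le_power_mult[OF assms(1)] by simp
    also have "\<dots> \<le> digits_cost c" by (rule bal_cost_le_digits_cost[OF assms(1) c(1)])
    finally show ?thesis using c(2) by simp
  next
    assume "n - m < 0 \<and> y = ?k ^ nat (- (n - m)) * horner_sum (\<lambda>x. x) ?k c"
    then have "y = 0"
      using assms(2) reduced_power_mult_eq_0[of ?k "nat (m - n)" "horner_sum (\<lambda>x. x) ?k c"] by simp
    then show ?thesis using bal_cost_small[OF assms(1), of 0] assms(1) by simp
  qed
qed

definition canonical_word :: "int \<Rightarrow> int \<Rightarrow> gen list" where
  "canonical_word r y = (if \<bar>y\<bar> \<le> r + 1 then apow y else cword (bal_digits r y))"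

lemma eval_canonical_word:
  "1 \<le> r \<Longrightarrow> eval_word (2 * r + 1) (canonical_word r y) = (of_int y, 0)"
  by (simp add: canonical_word_def eval_word_apow eval_cword bal_digits_ne_Nil horner_sum_bal_digits)

lemma length_canonical_word:
  "1 \<le> r \<Longrightarrow> int (length (canonical_word r y)) = bal_cost r y"
  by (simp add: canonical_word_def length_apow bal_cost_small length_cword bal_digits_ne_Nil
      flip: bal_cost_def)

lemma C_o_imp_canonical_word:
  assumes "1 \<le> r" "w \<in> C_o r"
  obtains y where "reduced (2 * r + 1) y" "w = canonical_word r y"
proof -
  from assms(2) consider (small) x where "w = apow x" "\<bar>x\<bar> \<le> r + 1"
    | (big) xs where "w = cword xs" "2 \<le> length xs" "hd xs \<noteq> 0" "bal_canonical r xs"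
    unfolding mem_C_o_iff by blast
  then show ?thesis
  proof cases
    case small
    then have "reduced (2 * r + 1) x" using assms by (intro reduced_if_abs_less) simp
    then show ?thesis using small that by (simp add: canonical_word_def)
  next
    case big
    then obtain x0 xs' where xs: "xs = x0 # xs'" by (cases xs) auto
    define y where "y = horner_sum (\<lambda>x. x) (2 * r + 1) xs"
    have "r + 1 < \<bar>y\<bar>" using big assms abs_horner_sum_gt y_def by blast
    then have w: "w = canonical_word r y"
      using big assms bal_digits_horner_sum by (simp add: canonical_word_def y_def)
    have "0 < \<bar>x0\<bar>" "\<bar>x0\<bar> \<le> r" using big xs by (cases xs'; auto)+
    then have "\<not> (2 * r + 1) dvd x0" using dvd_imp_le_int[of x0 "2 * r + 1"] by auto
    then have "reduced (2 * r + 1) y" by (simp add: reduced_def y_def xs dvd_add_left_iff)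
    then show ?thesis using w that by blast
  qed
qed

lemma canonical_word_mem_C_o:
  assumes "1 \<le> r" "reduced (2 * r + 1) y" shows "canonical_word r y \<in> C_o r"
proof (cases "\<bar>y\<bar> \<le> r + 1")
  case True
  then show ?thesis by (auto simp: mem_C_o_iff canonical_word_def)
next
  case False
  have digits: "bal_digits r y = bal_mod r y # bal_digits r (bal_div r y)"
    using False assms by (subst bal_digits.simps) simp
  have "bal_mod r y \<noteq> 0"
  proof
    assume "bal_mod r y = 0"
    then have "(2 * r + 1) dvd y" using bal_div_mod_eq[of y r] by (metis add_0 dvd_triv_left)
    then show False using assms False by (auto simp: reduced_def)
  qed
  moreover have "bal_canonical r (bal_digits r y)"
    using False assms by (intro bal_canonical_bal_digits) auto
  moreover have "2 \<le> length (bal_digits r y)"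
    using digits bal_digits_ne_Nil[of r "bal_div r y"] by (simp add: Suc_le_eq)
  ultimately show ?thesis
    using False digits unfolding mem_C_o_iff canonical_word_def
    by (intro disjI2 exI[of _ "bal_digits r y"]) simp
qed

lemma C_o_eq_canonical_words:
  "1 \<le> r \<Longrightarrow> C_o r = canonical_word r ` {y. reduced (2 * r + 1) y}"
  by (auto elim: C_o_imp_canonical_word intro: canonical_word_mem_C_o)

lemma canonical_word_minimal:
  assumes "1 \<le> r" "reduced (2 * r + 1) y"
  shows "geodesic (2 * r + 1) (canonical_word r y)"
    and "conj_class_minimal (2 * r + 1) (canonical_word r y)"
proof -
  have k: "2 * r + 1 \<noteq> 0" using assms(1) by simp
  have lower: "length (canonical_word r y) \<le> length v"
    if "eval_word (2 * r + 1) v = (of_int (2 * r + 1) powi n * of_int y, 0)" for v n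
    using bal_cost_le_length[OF assms that] length_canonical_word[OF assms(1), of y] by linarith
  show "geodesic (2 * r + 1) (canonical_word r y)"
    unfolding geodesic_def using lower[of _ 0] eval_canonical_word[OF assms(1)] by simp
  show "conj_class_minimal (2 * r + 1) (canonical_word r y)"
    unfolding conj_class_minimal_def eval_canonical_word[OF assms(1)] bs_conj_iff[OF k]
    using lower by blast
qed

lemma bs_conj_reduced_iff:
  fixes k y y' :: int
  assumes "k \<noteq> 0" "reduced k y" "reduced k y'" "(of_int y :: rat) = of_int k powi m * x"
  shows "bs_conj k (x, 0) (of_int y', 0) \<longleftrightarrow> y' = y"
proof
  assume "bs_conj k (x, 0) (of_int y', 0)"
  then obtain n where "(of_int y' :: rat) = of_int k powi n * x"
    by (auto simp: bs_conj_iff[OF assms(1)])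
  then have "(of_int y' :: rat) = of_int k powi (n - m) * of_int y"
    using assms(1,4) by (simp add: power_int_diff field_simps)
  then show "y' = y" by (rule reduced_eq_if_power_int_mult[OF assms(1-3)])
next
  assume "y' = y"
  then show "bs_conj k (x, 0) (of_int y', 0)"
    using assms(4) by (auto simp: bs_conj_iff[OF assms(1)])
qed

theorem proposition3p2:
  fixes r k :: int
  assumes "r \<ge> 1" and "k = 2 * r + 1"
  shows "(\<forall>w\<in>C_o r. snd (eval_word k w) = 0)
     \<and> (\<forall>x\<in>Zk k. \<exists>!w. w \<in> C_o r \<and> bs_conj k (x, 0) (eval_word k w))
     \<and> (\<forall>w\<in>C_o r. geodesic k w \<and> conj_class_minimal k w)"
proof (intro conjI ballI)
  have k: "k \<noteq> 0" "1 < \<bar>k\<bar>" using assms by auto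
  note C_o = C_o_eq_canonical_words[OF assms(1), folded assms(2)]
  note eval = eval_canonical_word[OF assms(1), folded assms(2)]
  show "snd (eval_word k w) = 0" if "w \<in> C_o r" for w
    using that eval by (auto simp: C_o)
  show "geodesic k w" "conj_class_minimal k w" if "w \<in> C_o r" for w
    using that canonical_word_minimal[OF assms(1)] by (auto simp: C_o assms(2))
  fix x assume "x \<in> Zk k"
  then obtain y m where y: "reduced k y" "(of_int y :: rat) = of_int k powi m * x"
    using exists_reduced_power_int_mult[OF k(2)] by blast
  have "bs_conj k (x, 0) (eval_word k (canonical_word r y')) \<longleftrightarrow> y' = y"
    if "reduced k y'" for y'
    using bs_conj_reduced_iff[OF k(1) y(1) that y(2)] eval by simp
  then show "\<exists>!w. w \<in> C_o r \<and> bs_conj k (x, 0) (eval_word k w)"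
    using y(1) by (auto simp: C_o intro!: ex1I[of _ "canonical_word r y"])
qed

end
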